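(* Let $\mathcal{X}=\{x\in\mathbb{R}^d:\|x\|_2\le B\}$, $\mathcal{Y}=\{1,\dots,k\}$, $\mathcal{Z}=\mathcal{X}\times\mathcal{Y}$ with metric $d_\mathcal{Z}((x,y),(x',y'))=\|x-x'\|_2+\mathbb{1}_{(y\ne y')}$. Let $\sigma_1,\dots,\sigma_L$ be coordinatewise activations with $\sigma_i$ $\rho_i$-Lipschitz and $\sigma_i(0)=0$, and for $\mathcal{A}=(A_1,\dots,A_L)$, $A_i\in\mathbb{R}^{d_i\times d_{i-1}}$, $d_0=d$, $d_L=k$, let $\mathcal{H}_\mathcal{A}(x)=\sigma_L(A_L\sigma_{L-1}(\cdots\sigma_1(A_1x)\cdots))$. Let $\mathcal{M}(v,y)=v_y-\max_{j\ne y}v_j$ and, for $\gamma>0$, $l_\gamma(r)=0$ if $r<-\gamma$, $1+r/\gamma$ if $r\in[-\gamma,0]$, $1$ if $r>0$. Let $\mathcal{F}=\{(x,y)\mapsto l_\gamma(-\mathcal{M}(\mathcal{H}_\mathcal{A}(x),y)):\|A_i\|_\sigma\le s_i,\|A_i\|_F\le b_i\}$. Let $P_n$ be the empirical distribution of points $(x_1,y_1),\dots,(x_n,y_n)\in\mathcal{Z}$. Then for any $f\in\mathcal{F}$ (with weights $\mathcal{A}$), $\lambda^+_{f,P_n}\le C_4$, where $$C_4:=\max_j\Big\{\frac2\gamma\prod_{i=1}^L\rho_i\|A_i\|_\sigma,\ \frac1\gamma\big(\mathcal{M}(\mathcal{H}_\mathcal{A}(x_j),y_j)+\max\mathcal{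H}_\mathcal{A}(x_j)-\min\mathcal{H}_\mathcal{A}(x_j)\big)\Big\}.$$
   Context: $\max v$ and $\min v$ denote the largest and smallest coordinates of a vector $v$; $\|\cdot\|_\sigma$ and $\|\cdot\|_F$ are the spectral and Frobenius norms. $\psi_{f,P_n}(\lambda):=\mathbb{E}_{z\sim P_n}\big(\sup_{z'\in\mathcal{Z}}\{f(z')-\lambda d_\mathcal{Z}(z,z')-f(z)\}\big)$ and $\lambda^+_{f,P_n}:=\inf\{\lambda:\psi_{f,P_n}(\lambda)=0\}$. *)

theory Defs
  imports Complex_Main "Jordan_Normal_Form.Matrix"
begin

definition vnorm :: "real vec \<Rightarrow> real" where
  "vnorm v = sqrt (\<Sum>i<dim_vec v. (v $ i)^2)"

definition spec_norm :: "real mat \<Rightarrow> real" where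
  "spec_norm A = Sup {vnorm (A *\<^sub>v w) | w. w \<in> carrier_vec (dim_col A) \<and> vnorm w \<le> 1}"

definition frob_norm :: "real mat \<Rightarrow> real" where
  "frob_norm A = sqrt (\<Sum>i<dim_row A. \<Sum>j<dim_col A. (A $$ (i, j))^2)"

definition vmax :: "real vec \<Rightarrow> real" where
  "vmax v = Max {v $ i | i. i < dim_vec v}"
definition vmin :: "real vec \<Rightarrow> real" where
  "vmin v = Min {v $ i | i. i < dim_vec v}"

text \<open>Margin M(v,y) = v_y - max_{j /= y} v_j, labels y in {1..k}, coordinate y stored at index y-1.\<close>
definition margin :: "real vec \<Rightarrow> nat \<Rightarrow> real" where
  "margin v y = v $ (y - 1) - Max {v $ (j - 1) | j. j \<in> {1..dim_vec v} \<and> j \<noteq> y}"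

definition ramp :: "real \<Rightarrow> real \<Rightarrow> real" where
  "ramp \<gamma> r = (if r < - \<gamma> then 0 else if r \<le> 0 then 1 + r / \<gamma> else 1)"

fun net :: "(nat \<Rightarrow> real \<Rightarrow> real) \<Rightarrow> (nat \<Rightarrow> real mat) \<Rightarrow> nat \<Rightarrow> real vec \<Rightarrow> real vec" where
  "net \<sigma> A 0 x = x"
| "net \<sigma> A (Suc i) x = map_vec (\<sigma> (Suc i)) (A (Suc i) *\<^sub>v net \<sigma> A i x)"

definition Zset :: "nat \<Rightarrow> nat \<Rightarrow> real \<Rightarrow> (real vec \<times> nat) set" where
  "Zset d k B = {(x, y). x \<in> carrier_vec d \<and> vnorm x \<le> B \<and> y \<in> {1..k}}"

definition dZ :: "real vec \<times> nat \<Rightarrow> real vec \<times> nat \<Rightarrow> real" where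
  "dZ z z' = vnorm (fst z - fst z') + (if snd z \<noteq> snd z' then 1 else 0)"

text \<open>psi_{f,P_n}(lambda) for the empirical distribution of zs 0, ..., zs (n-1).\<close>
definition psi :: "('z set) \<Rightarrow> ('z \<Rightarrow> 'z \<Rightarrow> real) \<Rightarrow> ('z \<Rightarrow> real) \<Rightarrow> (nat \<Rightarrow> 'z) \<Rightarrow> nat \<Rightarrow> real \<Rightarrow> real" where
  "psi Z dst f zs n lam =
     (\<Sum>j<n. Sup {f z' - lam * dst (zs j) z' - f (zs j) | z'. z' \<in> Z}) / real n"

definition lambda_plus :: "('z set) \<Rightarrow> ('z \<Rightarrow> 'z \<Rightarrow> real) \<Rightarrow> ('z \<Rightarrow> real) \<Rightarrow> (nat \<Rightarrow> 'z) \<Rightarrow> nat \<Rightarrow> real" where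
  "lambda_plus Z dst f zs n = Inf {lam. psi Z dst f zs n lam = 0}"

end

theory Submission
  imports Defs "HOL-Analysis.L2_Norm"
begin

(* Moving the input from x to x' moves the network output by at most
   K * |x - x'| with K the product of the rho_i * |A_i|_sigma; the margin is
   2-Lipschitz in the output and the ramp loss is (1/gamma)-Lipschitz, so the
   loss changes by at most (2/gamma) K |x - x'|.  Changing the label raises the
   loss at a sample point by at most 1 - l_gamma(-M) <= max 0 M / gamma, which
   is dominated by (M + max - min) / gamma.  Hence at lambda = C_4 every sample
   point maximises f(z') - lambda d(z, z'), so psi(C_4) = 0.  Since the loss
   lies in [0, 1] and a label flip is at distance 1, psi(lambda) > 0 for
   lambda < -1, so the zero set of psi is bounded below and its infimum is at
   most C_4. *)

section \<open>Euclidean norm of JNF vectors\<close>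

lemma vnorm_eq_L2_set: "vnorm v = L2_set (\<lambda>i. v $ i) {..<dim_vec v}"
  by (simp add: vnorm_def L2_set_def)

lemma vnorm_nonneg: "vnorm v \<ge> 0"
  by (simp add: vnorm_def sum_nonneg)

lemma vnorm_zero_vec [simp]: "vnorm (0\<^sub>v m) = 0"
  by (simp add: vnorm_def)

lemma vnorm_diff_self [simp]: "vnorm (v - v) = 0"
  by (simp add: vnorm_def)

lemma abs_index_le_vnorm: "i < dim_vec v \<Longrightarrow> \<bar>v $ i\<bar> \<le> vnorm v"
  using member_le_L2_set[of "{..<dim_vec v}" i "\<lambda>i. \<bar>v $ i\<bar>"]
  by (simp add: vnorm_eq_L2_set L2_set_def)

lemma abs_index_diff_le_vnorm:
  assumes "dim_vec a = dim_vec b" "i < dim_vec b"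
  shows "\<bar>a $ i - b $ i\<bar> \<le> vnorm (a - b)"
  using abs_index_le_vnorm[of i "a - b"] assms by simp

lemma vnorm_minus_commute:
  assumes "dim_vec a = dim_vec b"
  shows "vnorm (a - b) = vnorm (b - a)"
proof -
  have "(\<Sum>i<dim_vec b. ((a - b) $ i)\<^sup>2) = (\<Sum>i<dim_vec a. ((b - a) $ i)\<^sup>2)"
    using assms by (intro sum.cong) (auto simp: power2_commute)
  then show ?thesis using assms by (simp add: vnorm_def)
qed

lemma vnorm_diff_le:
  assumes "dim_vec a = dim_vec b"
  shows "vnorm (a - b) \<le> vnorm a + vnorm b"
proof -
  have "vnorm (a - b) = L2_set (\<lambda>i. a $ i + (- b $ i)) {..<dim_vec b}"
    unfolding vnorm_eq_L2_set by (intro L2_set_cong) (auto simp: assms)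
  also have "\<dots> \<le> vnorm a + L2_set (\<lambda>i. - b $ i) {..<dim_vec b}"
    using L2_set_triangle_ineq[of "\<lambda>i. a $ i" "\<lambda>i. - b $ i"] assms
    by (simp add: vnorm_eq_L2_set)
  also have "L2_set (\<lambda>i. - b $ i) {..<dim_vec b} = vnorm b"
    by (simp add: vnorm_eq_L2_set L2_set_def)
  finally show ?thesis .
qed

lemma vnorm_smult: "vnorm (c \<cdot>\<^sub>v v) = \<bar>c\<bar> * vnorm v"
proof -
  have "(\<Sum>i<dim_vec v. ((c \<cdot>\<^sub>v v) $ i)\<^sup>2) = c\<^sup>2 * (\<Sum>i<dim_vec v. (v $ i)\<^sup>2)"
    by (simp add: sum_distrib_left power_mult_distrib)
  then show ?thesis by (simp add: vnorm_def real_sqrt_mult)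
qed

lemma vnorm_eq_0_imp_zero_vec:
  assumes "v \<in> carrier_vec m" "vnorm v = 0"
  shows "v = 0\<^sub>v m"
proof (intro eq_vecI)
  fix i assume "i < dim_vec (0\<^sub>v m)"
  then show "v $ i = 0\<^sub>v m $ i"
    using abs_index_le_vnorm[of i v] assms by auto
qed (use assms in auto)

lemma lipschitz_const_nonneg:
  fixes f :: "real \<Rightarrow> real"
  assumes "\<forall>u v. \<bar>f u - f v\<bar> \<le> r * \<bar>u - v\<bar>"
  shows "r \<ge> 0"
  using assms[rule_format, of 1 0] abs_ge_zero[of "f 1 - f 0"] by simp

lemma vnorm_map_vec_diff_le:
  assumes "dim_vec a = dim_vec b" and f: "\<forall>u v. \<bar>f u - f v\<bar> \<le> r * \<bar>u - v\<bar>"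
  shows "vnorm (map_vec f a - map_vec f b) \<le> r * vnorm (a - b)"
proof -
  have r: "r \<ge> 0" using lipschitz_const_nonneg[OF f] .
  have "vnorm (map_vec f a - map_vec f b) = L2_set (\<lambda>i. f (a $ i) - f (b $ i)) {..<dim_vec b}"
    unfolding vnorm_eq_L2_set by (intro L2_set_cong) (auto simp: assms)
  also have "\<dots> \<le> L2_set (\<lambda>i. r * \<bar>a $ i - b $ i\<bar>) {..<dim_vec b}"
    unfolding L2_set_def
  proof (intro real_sqrt_le_mono sum_mono)
    fix i
    have "\<bar>f (a $ i) - f (b $ i)\<bar>\<^sup>2 \<le> (r * \<bar>a $ i - b $ i\<bar>)\<^sup>2"
      using f by (intro power_mono) auto
    then show "(f (a $ i) - f (b $ i))\<^sup>2 \<le> (r * \<bar>a $ i - b $ i\<bar>)\<^sup>2" by simp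
  qed
  also have "\<dots> = r * vnorm (a - b)"
  proof -
    have "(\<Sum>i<dim_vec b. (r * \<bar>a $ i - b $ i\<bar>)\<^sup>2) = r\<^sup>2 * (\<Sum>i<dim_vec b. ((a - b) $ i)\<^sup>2)"
      by (simp add: sum_distrib_left power_mult_distrib)
    then show ?thesis using r assms by (simp add: L2_set_def vnorm_def real_sqrt_mult)
  qed
  finally show ?thesis .
qed

section \<open>Matrix norms\<close>

lemma vnorm_mult_mat_vec_le_frob_norm:
  assumes "dim_vec w = dim_col A"
  shows "vnorm (A *\<^sub>v w) \<le> frob_norm A * vnorm w"
proof -
  have row: "((A *\<^sub>v w) $ i)\<^sup>2 \<le> (\<Sum>j<dim_col A. (A $$ (i, j))\<^sup>2) * (vnorm w)\<^sup>2"
    if i: "i < dim_row A" for i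
  proof -
    have "\<bar>(A *\<^sub>v w) $ i\<bar> = \<bar>\<Sum>j<dim_col A. A $$ (i, j) * w $ j\<bar>"
      using i assms by (simp add: scalar_prod_def atLeast0LessThan)
    also have "\<dots> \<le> (\<Sum>j<dim_col A. \<bar>A $$ (i, j)\<bar> * \<bar>w $ j\<bar>)"
      by (rule order_trans[OF sum_abs]) (simp add: abs_mult)
    also have "\<dots> \<le> L2_set (\<lambda>j. A $$ (i, j)) {..<dim_col A} * vnorm w"
      using L2_set_mult_ineq[of "\<lambda>j. A $$ (i, j)" "\<lambda>j. w $ j"] assms
      by (simp add: vnorm_eq_L2_set)
    finally have "\<bar>(A *\<^sub>v w) $ i\<bar>\<^sup>2 \<le> (L2_set (\<lambda>j. A $$ (i, j)) {..<dim_col A} * vnorm w)\<^sup>2"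
      by (intro power_mono) auto
    then show ?thesis
      by (simp add: power_mult_distrib L2_set_def sum_nonneg)
  qed
  have "(\<Sum>i<dim_row A. ((A *\<^sub>v w) $ i)\<^sup>2)
      \<le> (\<Sum>i<dim_row A. (\<Sum>j<dim_col A. (A $$ (i, j))\<^sup>2) * (vnorm w)\<^sup>2)"
    by (intro sum_mono row) auto
  also have "\<dots> = (frob_norm A * vnorm w)\<^sup>2"
    by (simp add: frob_norm_def power_mult_distrib sum_distrib_right sum_nonneg)
  finally have "sqrt (\<Sum>i<dim_row A. ((A *\<^sub>v w) $ i)\<^sup>2) \<le> sqrt ((frob_norm A * vnorm w)\<^sup>2)"
    by (rule real_sqrt_le_mono)
  then show ?thesis
    by (simp add: vnorm_def frob_norm_def vnorm_nonneg sum_nonneg)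
qed

lemma bdd_above_spec_norm_set:
  "bdd_above {vnorm (A *\<^sub>v w) | w. w \<in> carrier_vec (dim_col A) \<and> vnorm w \<le> 1}"
proof (rule bdd_aboveI[where M = "frob_norm A"], clarify)
  fix w :: "real vec" assume w: "w \<in> carrier_vec (dim_col A)" "vnorm w \<le> 1"
  have "vnorm (A *\<^sub>v w) \<le> frob_norm A * vnorm w"
    using w by (intro vnorm_mult_mat_vec_le_frob_norm) auto
  also have "\<dots> \<le> frob_norm A"
    using w by (intro mult_left_le) (auto simp: frob_norm_def vnorm_nonneg sum_nonneg)
  finally show "vnorm (A *\<^sub>v w) \<le> frob_norm A" .
qed

lemma vnorm_mult_mat_vec_le_spec_norm_unit:
  "w \<in> carrier_vec (dim_col A) \<Longrightarrow> vnorm w \<le> 1 \<Longrightarrow> vnorm (A *\<^sub>v w) \<le> spec_norm A"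
  unfolding spec_norm_def by (rule cSup_upper[OF _ bdd_above_spec_norm_set]) auto

lemma mult_mat_zero_vec: "A *\<^sub>v 0\<^sub>v (dim_col A) = 0\<^sub>v (dim_row A)"
  by (intro eq_vecI) (auto simp: scalar_prod_def)

lemma spec_norm_nonneg: "spec_norm A \<ge> 0"
  using vnorm_mult_mat_vec_le_spec_norm_unit[of "0\<^sub>v (dim_col A)" A]
  by (simp add: mult_mat_zero_vec)

lemma vnorm_mult_mat_vec_le_spec_norm:
  assumes w: "w \<in> carrier_vec (dim_col A)"
  shows "vnorm (A *\<^sub>v w) \<le> spec_norm A * vnorm w"
proof (cases "vnorm w = 0")
  case True
  then show ?thesis
    using vnorm_eq_0_imp_zero_vec[OF w] by (simp add: mult_mat_zero_vec)
next
  case False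
  then have pos: "vnorm w > 0" using vnorm_nonneg[of w] by auto
  let ?u = "(1 / vnorm w) \<cdot>\<^sub>v w"
  have "vnorm (A *\<^sub>v ?u) \<le> spec_norm A"
    using w pos by (intro vnorm_mult_mat_vec_le_spec_norm_unit) (auto simp: vnorm_smult)
  moreover have "A *\<^sub>v ?u = (1 / vnorm w) \<cdot>\<^sub>v (A *\<^sub>v w)"
    using w by (intro mult_mat_vec) auto
  ultimately have "vnorm (A *\<^sub>v w) / vnorm w \<le> spec_norm A"
    using pos by (simp add: vnorm_smult)
  then show ?thesis using pos by (simp add: divide_le_eq mult.commute)
qed

section \<open>Lipschitz continuity of the network\<close>

lemma net_carrier:
  assumes A: "\<forall>i\<in>{1..L}. A i \<in> carrier_mat (dims i) (dims (i - 1))"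
    and x: "x \<in> carrier_vec (dims 0)"
  shows "i \<le> L \<Longrightarrow> net \<sigma> A i x \<in> carrier_vec (dims i)"
proof (induction i)
  case 0
  then show ?case using x by simp
next
  case (Suc i)
  then have "A (Suc i) \<in> carrier_mat (dims (Suc i)) (dims i)"
    using A[rule_format, of "Suc i"] by simp
  then show ?case by (intro carrier_vecI) auto
qed

lemma net_lipschitz:
  assumes A: "\<forall>i\<in>{1..L}. A i \<in> carrier_mat (dims i) (dims (i - 1))"
    and x: "x \<in> carrier_vec (dims 0)" and x': "x' \<in> carrier_vec (dims 0)"
    and \<sigma>: "\<forall>i\<in>{1..L}. \<forall>u v. \<bar>\<sigma> i u - \<sigma> i v\<bar> \<le> \<rho> i * \<bar>u - v\<bar>"
  shows "i \<le> L \<Longrightarrow> vnorm (net \<sigma> A i x - net \<sigma> A i x')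
           \<le> (\<Prod>l=1..i. \<rho> l * spec_norm (A l)) * vnorm (x - x')"
proof (induction i)
  case 0
  then show ?case by simp
next
  case (Suc i)
  let ?v = "net \<sigma> A i x" and ?v' = "net \<sigma> A i x'" and ?B = "A (Suc i)"
  let ?K = "\<Prod>l=1..i. \<rho> l * spec_norm (A l)"
  have B: "?B \<in> carrier_mat (dims (Suc i)) (dims i)"
    using A[rule_format, of "Suc i"] Suc.prems by simp
  have \<sigma>i: "\<forall>u v. \<bar>\<sigma> (Suc i) u - \<sigma> (Suc i) v\<bar> \<le> \<rho> (Suc i) * \<bar>u - v\<bar>"
    using \<sigma> Suc.prems by auto
  have v: "?v \<in> carrier_vec (dims i)" "?v' \<in> carrier_vec (dims i)"
    using net_carrier[OF A x] net_carrier[OF A x'] Suc.prems by auto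
  have "?B *\<^sub>v ?v - ?B *\<^sub>v ?v' = ?B *\<^sub>v (?v - ?v')"
    using mult_minus_distrib_mat_vec[OF B v] by simp
  then have "vnorm (net \<sigma> A (Suc i) x - net \<sigma> A (Suc i) x')
      \<le> \<rho> (Suc i) * vnorm (?B *\<^sub>v (?v - ?v'))"
    using vnorm_map_vec_diff_le[OF _ \<sigma>i, of "?B *\<^sub>v ?v" "?B *\<^sub>v ?v'"] by simp
  also have "\<dots> \<le> \<rho> (Suc i) * (spec_norm ?B * vnorm (?v - ?v'))"
    using vnorm_mult_mat_vec_le_spec_norm[of "?v - ?v'" ?B] B v lipschitz_const_nonneg[OF \<sigma>i]
    by (intro mult_left_mono) auto
  also have "\<dots> \<le> \<rho> (Suc i) * (spec_norm ?B * (?K * vnorm (x - x')))"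
    using Suc spec_norm_nonneg lipschitz_const_nonneg[OF \<sigma>i]
    by (intro mult_left_mono) auto
  also have "\<dots> = (\<Prod>l=1..Suc i. \<rho> l * spec_norm (A l)) * vnorm (x - x')"
    by (subst prod.nat_ivl_Suc') (simp_all add: mult_ac)
  finally show ?case .
qed

section \<open>Margin and ramp loss\<close>

lemma other_label_exists:
  assumes "k \<ge> 2" "y \<in> {1..k}"
  shows "\<exists>j\<in>{1..k::nat}. j \<noteq> y"
  using assms by (intro bexI[of _ "if y = 1 then 2 else 1"]) auto

lemma margin_eq_Max_image:
  "margin v y = v $ (y - 1) - Max ((\<lambda>j. v $ (j - 1)) ` {j\<in>{1..dim_vec v}. j \<noteq> y})"
  unfolding margin_def by (rule arg_cong[where f = "\<lambda>S. v $ (y - 1) - Max S"]) auto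

lemma margin_diff_le:
  assumes v: "dim_vec v = k" "dim_vec v' = k" and "k \<ge> 2" "y \<in> {1..k}"
  shows "margin v' y - margin v y \<le> 2 * vnorm (v' - v)"
proof -
  let ?J = "{j\<in>{1..k}. j \<noteq> y}"
  have coord: "\<bar>v' $ (j - 1) - v $ (j - 1)\<bar> \<le> vnorm (v' - v)" if "j \<in> {1..k}" for j
    using that v by (intro abs_index_diff_le_vnorm) auto
  have "?J \<noteq> {}" using other_label_exists[OF assms(3,4)] by auto
  then have "Max ((\<lambda>j. v $ (j - 1)) ` ?J) \<le> Max ((\<lambda>j. v' $ (j - 1)) ` ?J) + vnorm (v' - v)"
  proof (intro Max.boundedI ballI)
    fix a assume "a \<in> (\<lambda>j. v $ (j - 1)) ` ?J"
    then obtain j where j: "j \<in> ?J" and a: "a = v $ (j - 1)" by blast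
    have "v' $ (j - 1) \<le> Max ((\<lambda>j. v' $ (j - 1)) ` ?J)" using j by (intro Max_ge) auto
    moreover have "\<bar>v' $ (j - 1) - v $ (j - 1)\<bar> \<le> vnorm (v' - v)" using coord j by blast
    ultimately show "a \<le> Max ((\<lambda>j. v' $ (j - 1)) ` ?J) + vnorm (v' - v)"
      using a by linarith
  qed auto
  then show ?thesis
    using coord[OF assms(4)] unfolding margin_eq_Max_image v by linarith
qed

lemma abs_margin_diff_le:
  assumes "dim_vec v = k" "dim_vec v' = k" "k \<ge> 2" "y \<in> {1..k}"
  shows "\<bar>margin v' y - margin v y\<bar> \<le> 2 * vnorm (v' - v)"
  using margin_diff_le[OF assms] margin_diff_le[of v' k v y] assms
    vnorm_minus_commute[of v v'] by auto

lemma index_in_vmin_vmax: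
  assumes "i < dim_vec v"
  shows "vmin v \<le> v $ i" "v $ i \<le> vmax v"
  using assms unfolding vmin_def vmax_def by (auto intro!: Min_le Max_ge)

lemma margin_ge_vmin_minus_vmax:
  assumes "dim_vec v = k" "k \<ge> 2" "y \<in> {1..k}"
  shows "vmin v - vmax v \<le> margin v y"
proof -
  let ?J = "{j\<in>{1..k}. j \<noteq> y}"
  have "?J \<noteq> {}" using other_label_exists[OF assms(2,3)] by auto
  then have "Max ((\<lambda>j. v $ (j - 1)) ` ?J) \<in> (\<lambda>j. v $ (j - 1)) ` ?J" by (intro Max_in) auto
  then obtain j where j: "j \<in> ?J" "Max ((\<lambda>j. v $ (j - 1)) ` ?J) = v $ (j - 1)" by auto
  have "j - 1 < dim_vec v" "y - 1 < dim_vec v" using j assms by auto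
  then show ?thesis
    using index_in_vmin_vmax[of "j - 1" v] index_in_vmin_vmax[of "y - 1" v] j assms
    unfolding margin_eq_Max_image by auto
qed

lemma ramp_bounds:
  assumes "\<gamma> > 0"
  shows "0 \<le> ramp \<gamma> r" "ramp \<gamma> r \<le> 1"
  using assms unfolding ramp_def by (simp_all add: field_simps)

lemma ramp_diff_le:
  assumes "\<gamma> > 0"
  shows "ramp \<gamma> r - ramp \<gamma> r' \<le> \<bar>r - r'\<bar> / \<gamma>"
proof -
  have "\<bar>r - r'\<bar> / \<gamma> = \<bar>r / \<gamma> - r' / \<gamma>\<bar>"
    using assms by (simp add: abs_divide flip: diff_divide_distrib)
  moreover have "r < - \<gamma> \<longleftrightarrow> r / \<gamma> < -1" "r \<le> 0 \<longleftrightarrow> r / \<gamma> \<le> 0"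
    "r' < - \<gamma> \<longleftrightarrow> r' / \<gamma> < -1" "r' \<le> 0 \<longleftrightarrow> r' / \<gamma> \<le> 0"
    using assms by (simp_all add: field_simps)
  ultimately show ?thesis unfolding ramp_def by auto
qed

lemma one_minus_ramp_le:
  assumes "\<gamma> > 0"
  shows "1 - ramp \<gamma> (- m) \<le> max 0 (m / \<gamma>)"
  using assms unfolding ramp_def by (simp add: field_simps)

lemma ramp_margin_increment_le:
  assumes \<gamma>: "\<gamma> > 0" and v: "dim_vec v = k" "dim_vec v' = k"
    and k: "k \<ge> 2" and y: "y \<in> {1..k}" "y' \<in> {1..k}"
  shows "ramp \<gamma> (- margin v' y') - ramp \<gamma> (- margin v y)
    \<le> 2 * vnorm (v' - v) / \<gamma>
      + (if y' = y then 0 else (margin v y + vmax v - vmin v) / \<gamma>)"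
proof -
  have move: "ramp \<gamma> (- margin v' y') - ramp \<gamma> (- margin v y') \<le> 2 * vnorm (v' - v) / \<gamma>"
    using ramp_diff_le[OF \<gamma>, of "- margin v' y'" "- margin v y'"]
      abs_margin_diff_le[OF v k y(2)] \<gamma>
    by (smt (verit) divide_right_mono)
  have relabel: "ramp \<gamma> (- margin v y') - ramp \<gamma> (- margin v y)
      \<le> (margin v y + vmax v - vmin v) / \<gamma>"
  proof -
    have "ramp \<gamma> (- margin v y') - ramp \<gamma> (- margin v y) \<le> max 0 (margin v y / \<gamma>)"
      using ramp_bounds[OF \<gamma>, of "- margin v y'"] one_minus_ramp_le[OF \<gamma>, of "margin v y"]
      by linarith
    also have "\<dots> \<le> (margin v y + vmax v - vmin v) / \<gamma>"
    proof -
      have "y - 1 < dim_vec v" using y(1) v(1) by auto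
      then have "vmin v \<le> vmax v" using index_in_vmin_vmax by fastforce
      then show ?thesis
        using margin_ge_vmin_minus_vmax[OF v(1) k y(1)] \<gamma> by (auto intro!: divide_right_mono)
    qed
    finally show ?thesis .
  qed
  show ?thesis
    using move relabel by (cases "y' = y") auto
qed

lemma net_loss_increment_le:
  assumes A: "\<forall>i\<in>{1..L}. A i \<in> carrier_mat (dims i) (dims (i - 1))"
    and \<sigma>: "\<forall>i\<in>{1..L}. \<forall>u v. \<bar>\<sigma> i u - \<sigma> i v\<bar> \<le> \<rho> i * \<bar>u - v\<bar>"
    and dims: "dims L = k" and k: "k \<ge> 2" and \<gamma>: "\<gamma> > 0"
    and x: "x \<in> carrier_vec (dims 0)" "x' \<in> carrier_vec (dims 0)"
    and y: "y \<in> {1..k}" "y' \<in> {1..k}"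
  defines "v \<equiv> net \<sigma> A L x"
  shows "ramp \<gamma> (- margin (net \<sigma> A L x') y') - ramp \<gamma> (- margin v y)
    \<le> 2 / \<gamma> * (\<Prod>i=1..L. \<rho> i * spec_norm (A i)) * vnorm (x - x')
      + (if y' = y then 0 else (margin v y + vmax v - vmin v) / \<gamma>)"
proof -
  have dim: "dim_vec v = k" "dim_vec (net \<sigma> A L x') = k"
    using net_carrier[OF A x(1)] net_carrier[OF A x(2)] dims v_def by auto
  have "vnorm (net \<sigma> A L x' - v) \<le> (\<Prod>i=1..L. \<rho> i * spec_norm (A i)) * vnorm (x - x')"
    using net_lipschitz[OF A x(2,1) \<sigma>] vnorm_minus_commute[of x x'] x v_def by auto
  then have "2 * vnorm (net \<sigma> A L x' - v) / \<gamma>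
      \<le> 2 / \<gamma> * (\<Prod>i=1..L. \<rho> i * spec_norm (A i)) * vnorm (x - x')"
    using \<gamma> by (simp add: divide_right_mono)
  then show ?thesis
    using ramp_margin_increment_le[OF \<gamma> dim k y] by linarith
qed

lemma dZ_self [simp]: "dZ z z = 0"
  by (simp add: dZ_def)

lemma dZ_le_on_Zset:
  assumes "z \<in> Zset d k B" "z' \<in> Zset d k B"
  shows "dZ z z' \<le> 2 * B + 1"
proof -
  have "vnorm (fst z - fst z') \<le> vnorm (fst z) + vnorm (fst z')"
    using assms by (intro vnorm_diff_le) (auto simp: Zset_def)
  then show ?thesis using assms by (auto simp: Zset_def dZ_def)
qed

lemma label_flip_in_Zset:
  assumes "(x, y) \<in> Zset d k B" "k \<ge> 2"
  obtains y' where "(x, y') \<in> Zset d k B" "dZ (x, y) (x, y') = 1"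
proof -
  obtain y' where "y' \<in> {1..k}" "y' \<noteq> y"
    using other_label_exists[OF assms(2), of y] assms(1) by (auto simp: Zset_def)
  then show ?thesis using that assms(1) by (auto simp: Zset_def dZ_def)
qed

lemma net_loss_increment_le_dZ:
  assumes A: "\<forall>i\<in>{1..L}. A i \<in> carrier_mat (dims i) (dims (i - 1))"
    and \<sigma>: "\<forall>i\<in>{1..L}. \<forall>u v. \<bar>\<sigma> i u - \<sigma> i v\<bar> \<le> \<rho> i * \<bar>u - v\<bar>"
    and dims: "dims 0 = d" "dims L = k" and k: "k \<ge> 2" and \<gamma>: "\<gamma> > 0"
    and z: "(x, y) \<in> Zset d k B" "(x', y') \<in> Zset d k B"
    and C: "2 / \<gamma> * (\<Prod>i=1..L. \<rho> i * spec_norm (A i)) \<le> C"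
      "(margin (net \<sigma> A L x) y + vmax (net \<sigma> A L x) - vmin (net \<sigma> A L x)) / \<gamma> \<le> C"
  shows "ramp \<gamma> (- margin (net \<sigma> A L x') y') - ramp \<gamma> (- margin (net \<sigma> A L x) y)
    \<le> C * dZ (x, y) (x', y')"
proof -
  have "ramp \<gamma> (- margin (net \<sigma> A L x') y') - ramp \<gamma> (- margin (net \<sigma> A L x) y)
    \<le> 2 / \<gamma> * (\<Prod>i=1..L. \<rho> i * spec_norm (A i)) * vnorm (x - x')
      + (if y' = y then 0
         else (margin (net \<sigma> A L x) y + vmax (net \<sigma> A L x) - vmin (net \<sigma> A L x)) / \<gamma>)"
    using z dims by (intro net_loss_increment_le[OF A \<sigma> dims(2) k \<gamma>]) (auto simp: Zset_def)
  also have "\<dots> \<le> C * vnorm (x - x') + (if y' = y then 0 else C)"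
    using C vnorm_nonneg[of "x - x'"] by (intro add_mono mult_right_mono) auto
  also have "\<dots> = C * dZ (x, y) (x', y')"
    by (simp add: dZ_def distrib_left eq_commute)
  finally show ?thesis .
qed

section \<open>The empirical transport functional\<close>

definition transport_gain ::
  "'z set \<Rightarrow> ('z \<Rightarrow> 'z \<Rightarrow> real) \<Rightarrow> ('z \<Rightarrow> real) \<Rightarrow> real \<Rightarrow> 'z \<Rightarrow> real" where
  "transport_gain Z dst f lam z = Sup {f z' - lam * dst z z' - f z | z'. z' \<in> Z}"

lemma psi_eq_sum_transport_gain:
  "psi Z dst f zs n lam = (\<Sum>j<n. transport_gain Z dst f lam (zs j)) / real n"
  by (simp add: psi_def transport_gain_def)

lemma transport_gain_eq_0:
  assumes "z \<in> Z" "dst z z = 0" "\<forall>z'\<in>Z. f z' - f z \<le> lam * dst z z'"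
  shows "transport_gain Z dst f lam z = 0"
  unfolding transport_gain_def
proof (rule cSup_eq_maximum)
  show "0 \<in> {f z' - lam * dst z z' - f z | z'. z' \<in> Z}"
    using assms(1,2) by force
qed (use assms(3) in fastforce)

lemma transport_gain_ge:
  assumes "z' \<in> Z" "\<forall>z''\<in>Z. f z'' - lam * dst z z'' \<le> M"
  shows "f z' - lam * dst z z' - f z \<le> transport_gain Z dst f lam z"
  unfolding transport_gain_def
proof (rule cSup_upper)
  show "bdd_above {f z' - lam * dst z z' - f z | z'. z' \<in> Z}"
    using assms(2) by (intro bdd_aboveI[where M = "M - f z"]) force
qed (use assms(1) in blast)

text \<open>Without a lower bound on the zero set of psi its infimum would be a junk value.\<close>

lemma psi_eq_0_imp_ge_minus_1:
  assumes n: "n \<ge> 1" and zs: "\<forall>j<n. zs j \<in> Z \<and> dst (zs j) (zs j) = 0"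
    and f: "\<forall>z\<in>Z. 0 \<le> f z \<and> f z \<le> 1"
    and D: "\<forall>j<n. \<forall>z\<in>Z. dst (zs j) z \<le> D"
    and z1: "z1 \<in> Z" "dst (zs 0) z1 \<ge> 1"
    and psi: "psi Z dst f zs n lam = 0"
  shows "lam \<ge> -1"
proof (rule ccontr)
  assume "\<not> lam \<ge> -1"
  then have lam: "lam < -1" by simp
  let ?g = "\<lambda>j. transport_gain Z dst f lam (zs j)"
  have bdd: "\<forall>z\<in>Z. f z - lam * dst (zs j) z \<le> 1 + (- lam) * D" if j: "j < n" for j
  proof
    fix z assume z: "z \<in> Z"
    have "- lam * dst (zs j) z \<le> - lam * D" using D j z lam by (intro mult_left_mono) auto
    then show "f z - lam * dst (zs j) z \<le> 1 + (- lam) * D" using f z by auto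
  qed
  have "?g j \<ge> 0" if j: "j < n" for j
  proof -
    have "f (zs j) - lam * dst (zs j) (zs j) - f (zs j) \<le> ?g j"
      by (rule transport_gain_ge) (use zs bdd j in auto)
    then show ?thesis using zs j by simp
  qed
  moreover have "?g 0 > 0"
  proof -
    have "- lam * 1 \<le> - lam * dst (zs 0) z1" using z1 lam by (intro mult_left_mono) auto
    moreover have "0 \<le> f z1" "f (zs 0) \<le> 1" using f z1 zs n by auto
    ultimately have "0 < f z1 - lam * dst (zs 0) z1 - f (zs 0)"
      using lam by linarith
    also have "\<dots> \<le> ?g 0" by (rule transport_gain_ge) (use z1 bdd n in auto)
    finally show ?thesis .
  qed
  ultimately have "0 < (\<Sum>j<n. ?g j)"
    using n by (intro sum_pos2[where i = 0]) auto
  then show False using psi n by (simp add: psi_eq_sum_transport_gain)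
qed

lemma lambda_plus_le:
  assumes n: "n \<ge> 1" and zs: "\<forall>j<n. zs j \<in> Z \<and> dst (zs j) (zs j) = 0"
    and f: "\<forall>z\<in>Z. 0 \<le> f z \<and> f z \<le> 1"
    and D: "\<forall>j<n. \<forall>z\<in>Z. dst (zs j) z \<le> D"
    and z1: "z1 \<in> Z" "dst (zs 0) z1 \<ge> 1"
    and slope: "\<forall>j<n. \<forall>z\<in>Z. f z - f (zs j) \<le> C * dst (zs j) z"
  shows "lambda_plus Z dst f zs n \<le> C"
  unfolding lambda_plus_def
proof (rule cInf_lower)
  show "C \<in> {lam. psi Z dst f zs n lam = 0}"
    using zs slope by (simp add: psi_eq_sum_transport_gain transport_gain_eq_0)
  show "bdd_below {lam. psi Z dst f zs n lam = 0}"
    using psi_eq_0_imp_ge_minus_1[OF n zs f D z1] by (intro bdd_belowI) auto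
qed

theorem lemmaC2:
  fixes d k L n :: nat and B \<gamma> :: real
    and dims :: "nat \<Rightarrow> nat"
    and \<sigma> :: "nat \<Rightarrow> real \<Rightarrow> real" and \<rho> s b :: "nat \<Rightarrow> real"
    and A :: "nat \<Rightarrow> real mat"
    and xs :: "nat \<Rightarrow> real vec" and ys :: "nat \<Rightarrow> nat"
  assumes k2: "k \<ge> 2" and L1: "L \<ge> 1" and gpos: "\<gamma> > 0"
    and d0: "dims 0 = d" and dL: "dims L = k"
    and Adim: "\<forall>i\<in>{1..L}. A i \<in> carrier_mat (dims i) (dims (i - 1))"
    and lip: "\<forall>i\<in>{1..L}. \<forall>u v. \<bar>\<sigma> i u - \<sigma> i v\<bar> \<le> \<rho> i * \<bar>u - v\<bar>"
    and sig0: "\<forall>i\<in>{1..L}. \<sigma> i 0 = 0"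
    and specb: "\<forall>i\<in>{1..L}. spec_norm (A i) \<le> s i"
    and frobb: "\<forall>i\<in>{1..L}. frob_norm (A i) \<le> b i"
    and n1: "n \<ge> 1"
    and pts: "\<forall>j<n. (xs j, ys j) \<in> Zset d k B"
  shows "lambda_plus (Zset d k B) dZ
           (\<lambda>(x, y). ramp \<gamma> (- margin (net \<sigma> A L x) y))
           (\<lambda>j. (xs j, ys j)) n
         \<le> Max ((\<lambda>j. max ((2 / \<gamma>) * (\<Prod>i=1..L. \<rho> i * spec_norm (A i)))
                        ((margin (net \<sigma> A L (xs j)) (ys j)
                          + vmax (net \<sigma> A L (xs j)) - vmin (net \<sigma> A L (xs j))) / \<gamma>))
                ` {..<n})"
proof -
  let ?v = "\<lambda>j. net \<sigma> A L (xs j)"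
  let ?K = "\<Prod>i=1..L. \<rho> i * spec_norm (A i)"
  define C where "C = Max ((\<lambda>j. max (2 / \<gamma> * ?K)
    ((margin (?v j) (ys j) + vmax (?v j) - vmin (?v j)) / \<gamma>)) ` {..<n})"
  have C: "2 / \<gamma> * ?K \<le> C" "(margin (?v j) (ys j) + vmax (?v j) - vmin (?v j)) / \<gamma> \<le> C"
    if "j < n" for j
  proof -
    have "max (2 / \<gamma> * ?K) ((margin (?v j) (ys j) + vmax (?v j) - vmin (?v j)) / \<gamma>) \<le> C"
      unfolding C_def using that by (intro Max_ge) auto
    then show "2 / \<gamma> * ?K \<le> C" "(margin (?v j) (ys j) + vmax (?v j) - vmin (?v j)) / \<gamma> \<le> C"
      by simp_all
  qed
  obtain y1 where flip: "(xs 0, y1) \<in> Zset d k B" "dZ (xs 0, ys 0) (xs 0, y1) = 1"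
  proof -
    have "(xs 0, ys 0) \<in> Zset d k B" using pts n1 by simp
    then show ?thesis using label_flip_in_Zset[OF _ k2] that by blast
  qed
  have "lambda_plus (Zset d k B) dZ (\<lambda>(x, y). ramp \<gamma> (- margin (net \<sigma> A L x) y))
      (\<lambda>j. (xs j, ys j)) n \<le> C"
  proof (rule lambda_plus_le[OF n1 _ _ _ flip(1)])
    show "\<forall>j<n. \<forall>z\<in>Zset d k B. dZ (xs j, ys j) z \<le> 2 * B + 1"
      using pts dZ_le_on_Zset by blast
    show "\<forall>j<n. \<forall>z\<in>Zset d k B. (\<lambda>(x, y). ramp \<gamma> (- margin (net \<sigma> A L x) y)) z
        - (\<lambda>(x, y). ramp \<gamma> (- margin (net \<sigma> A L x) y)) (xs j, ys j) \<le> C * dZ (xs j, ys j) z"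
      using pts C net_loss_increment_le_dZ[OF Adim lip d0 dL k2 gpos] by fastforce
  qed (use pts flip ramp_bounds[OF gpos] in auto)
  then show ?thesis unfolding C_def .
qed

end
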